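(* Let $X\in\mathbb{R}^{n\times d}$, $y\in\mathbb{R}^n$, and let $g:\mathbb{R}^d\to(-\infty,\infty]$ be a proper lower semicontinuous convex function with $g(k\beta)=kg(\beta)$ for all $k\ge0$, $\beta\in\mathbb{R}^d$, such that there exists $\beta\in\mathrm{relint}(\mathrm{dom}(g))$ and $P(\beta):=\frac12\|y-X\beta\|_2^2+g(\beta)$ attains its infimum. Let $D(\theta)=-\frac12\|\theta\|_2^2+y^\top\theta-g^\star(X^\top\theta)$ be the Fenchel–Rockafellar dual objective and $\hat\theta$ a maximizer of $D$. Let $\tilde\beta\in\mathbb{R}^d$ and $\tilde\theta\in\mathrm{dom}(D)$. Then $\hat\theta$ belongs to \[ \mathcal{R}^{\mathrm{DS}}(\tilde\beta,\tilde\theta):=\Big\{\theta\ \Big|\ \Big\|\theta-\tfrac12(\tilde\theta+y)\Big\|_2^2\le\tfrac14\|\tilde\theta-y\|_2^2\ \land\ 0\le g(\tilde\beta)-\theta^\top X\tilde\beta\Big\}. \]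
   Context: $g^\star(v)=\sup_\beta v^\top\beta-g(\beta)$ is the Fenchel conjugate; $\mathrm{dom}(h)=\{z:|h(z)|<\infty\}$; $\mathrm{relint}$ is relative interior. *)

theory Defs
  imports "HOL-Analysis.Analysis" "HOL-Library.Extended_Real"
begin

definition edom :: "('a \<Rightarrow> ereal) \<Rightarrow> 'a set" where
  "edom h = {z. \<bar>h z\<bar> < \<infinity>}"

definition proper_fun :: "('a \<Rightarrow> ereal) \<Rightarrow> bool" where
  "proper_fun g \<longleftrightarrow> (\<forall>x. g x \<noteq> -\<infinity>) \<and> (\<exists>x. g x \<noteq> \<infinity>)"

definition lsc_fun :: "('a::topological_space \<Rightarrow> ereal) \<Rightarrow> bool" where
  "lsc_fun g \<longleftrightarrow> (\<forall>x. g x \<le> Liminf (at x) g)"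

definition convex_efun :: "('a::real_vector \<Rightarrow> ereal) \<Rightarrow> bool" where
  "convex_efun g \<longleftrightarrow>
     (\<forall>x y u. 0 < u \<and> u < 1 \<longrightarrow>
        g (u *\<^sub>R x + (1 - u) *\<^sub>R y) \<le> ereal u * g x + ereal (1 - u) * g y)"

definition fenchel_conj :: "('a::real_inner \<Rightarrow> ereal) \<Rightarrow> 'a \<Rightarrow> ereal" where
  "fenchel_conj g v = (SUP \<beta>. ereal (v \<bullet> \<beta>) - g \<beta>)"

definition primal_obj :: "real^'d^'n \<Rightarrow> real^'n \<Rightarrow> (real^'d \<Rightarrow> ereal) \<Rightarrow> real^'d \<Rightarrow> ereal" where
  "primal_obj X y g \<beta> = ereal (1/2 * (norm (y - X *v \<beta>))\<^sup>2) + g \<beta>"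

definition dual_obj :: "real^'d^'n \<Rightarrow> real^'n \<Rightarrow> (real^'d \<Rightarrow> ereal) \<Rightarrow> real^'n \<Rightarrow> ereal" where
  "dual_obj X y g \<theta> = ereal (- 1/2 * (norm \<theta>)\<^sup>2 + y \<bullet> \<theta>) - fenchel_conj g (transpose X *v \<theta>)"

end

theory Submission
  imports Defs
begin

text \<open>For positively homogeneous \<open>g\<close> the conjugate \<open>g\<^sup>\<star>\<close> is the indicator (in the
  sense of convex analysis) of the closed convex set of slopes \<open>v\<close> with \<open>v\<^sup>T\<beta> \<le> g \<beta>\<close>.
  Hence the dual objective is \<open>(\<parallel>y\<parallel>\<^sup>2 - \<parallel>y - \<theta>\<parallel>\<^sup>2)/2\<close> on a closed convex set \<open>C\<close> and
  \<open>-\<infinity>\<close> outside, so the dual maximiser \<open>\<theta>hat\<close> is the projection of \<open>y\<close> onto \<open>C\<close>.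
  The obtuse-angle characterisation of the projection, applied to \<open>\<theta>t \<in> C\<close>, says that
  \<open>\<theta>hat\<close> lies in the ball with diameter \<open>[\<theta>t, y]\<close>; and \<open>\<theta>hat \<in> C\<close> is the second
  condition.\<close>

definition linear_minorants :: "('a::real_inner \<Rightarrow> ereal) \<Rightarrow> 'a set" where
  "linear_minorants g = {v. \<forall>\<beta>. ereal (v \<bullet> \<beta>) \<le> g \<beta>}"

lemma linear_minorants_eq_INT:
  "linear_minorants g = (\<Inter>\<beta>. {v. ereal (\<beta> \<bullet> v) \<le> g \<beta>})"
  by (auto simp: linear_minorants_def inner_commute)

lemma convex_ereal_halfspace_le: "convex {x. ereal (a \<bullet> x) \<le> c}"
  by (cases c) (simp_all add: convex_halfspace_le)

lemma closed_ereal_halfspace_le: "closed {x. ereal (a \<bullet> x) \<le> c}"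
  by (cases c) (simp_all add: closed_halfspace_le)

lemma convex_linear_minorants: "convex (linear_minorants g)"
  unfolding linear_minorants_eq_INT by (intro convex_INT convex_ereal_halfspace_le)

lemma closed_linear_minorants: "closed (linear_minorants g)"
  unfolding linear_minorants_eq_INT by (simp add: closed_INT closed_ereal_halfspace_le)

lemma fenchel_conj_positively_homogeneous:
  fixes g :: "'a::real_inner \<Rightarrow> ereal"
  assumes homog: "\<And>k \<beta>. k \<ge> 0 \<Longrightarrow> g (k *\<^sub>R \<beta>) = ereal k * g \<beta>"
    and no_minf: "\<And>\<beta>. g \<beta> \<noteq> -\<infinity>"
  shows "fenchel_conj g v = (if v \<in> linear_minorants g then 0 else \<infinity>)"
proof (cases "v \<in> linear_minorants g")
  case True
  \<comment> \<open>\<open>k = 0\<close> in the homogeneity law gives \<open>g 0 = 0\<close> because \<open>0 * \<infinity> = 0\<close> in \<open>ereal\<close>\<close>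
  have "g 0 = 0"
    using homog[of 0 0] by (simp add: zero_ereal_def[symmetric])
  then have "0 \<le> (SUP \<beta>. ereal (v \<bullet> \<beta>) - g \<beta>)"
    by (intro SUP_upper2[of 0]) (simp_all add: zero_ereal_def)
  moreover have "ereal (v \<bullet> \<beta>) - g \<beta> \<le> 0" for \<beta>
    using True by (cases "g \<beta>") (auto simp: linear_minorants_def dest: spec[of _ \<beta>])
  ultimately have "(SUP \<beta>. ereal (v \<bullet> \<beta>) - g \<beta>) = 0"
    by (intro antisym SUP_least)
  with True show ?thesis
    by (simp add: fenchel_conj_def)
next
  case False
  then obtain \<beta> where "g \<beta> < ereal (v \<bullet> \<beta>)"
    by (auto simp: linear_minorants_def not_le)
  then obtain r where r: "g \<beta> = ereal r" and "r < v \<bullet> \<beta>"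
    using no_minf[of \<beta>] by (cases "g \<beta>") auto
  define d where "d = v \<bullet> \<beta> - r"
  have "d > 0"
    using \<open>r < v \<bullet> \<beta>\<close> by (simp add: d_def)
  have ray: "ereal (v \<bullet> (k *\<^sub>R \<beta>)) - g (k *\<^sub>R \<beta>) = ereal (k * d)" if "k \<ge> 0" for k
    using homog[OF that, of \<beta>] r by (simp add: d_def algebra_simps)
  have "(SUP \<beta>. ereal (v \<bullet> \<beta>) - g \<beta>) = top"
  proof (subst SUP_eq_top_iff, intro allI impI)
    fix x :: ereal
    assume "x < top"
    then obtain n :: nat where "x < ereal (real n)"
      using less_PInf_Ex_of_nat by (auto simp: top_ereal_def)
    moreover have "ereal (v \<bullet> ((real n / d) *\<^sub>R \<beta>)) - g ((real n / d) *\<^sub>R \<beta>) = ereal (real n)"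
      using ray[of "real n / d"] \<open>d > 0\<close> by simp
    ultimately show "\<exists>\<beta>\<in>UNIV. x < ereal (v \<bullet> \<beta>) - g \<beta>"
      by (metis UNIV_I)
  qed
  with False show ?thesis
    by (simp add: fenchel_conj_def top_ereal_def)
qed

definition dual_feasible :: "real^'d^'n \<Rightarrow> (real^'d \<Rightarrow> ereal) \<Rightarrow> (real^'n) set" where
  "dual_feasible X g = (\<lambda>\<theta>. transpose X *v \<theta>) -` linear_minorants g"

lemma convex_dual_feasible: "convex (dual_feasible X g)"
  unfolding dual_feasible_def by (intro convex_linear_vimage convex_linear_minorants) simp

lemma closed_dual_feasible: "closed (dual_feasible X g)"
  unfolding dual_feasible_def
  by (intro continuous_closed_vimage closed_linear_minorants linear_continuous_at)
    (auto intro: linear_linear[THEN iffD1])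

lemma dual_obj_positively_homogeneous:
  assumes homog: "\<And>k \<beta>. k \<ge> 0 \<Longrightarrow> g (k *\<^sub>R \<beta>) = ereal k * g \<beta>"
    and no_minf: "\<And>\<beta>. g \<beta> \<noteq> -\<infinity>"
  shows "dual_obj X y g \<theta> =
    (if \<theta> \<in> dual_feasible X g then ereal (((norm y)\<^sup>2 - (dist y \<theta>)\<^sup>2) / 2) else -\<infinity>)"
proof -
  have "- 1/2 * (norm \<theta>)\<^sup>2 + y \<bullet> \<theta> = ((norm y)\<^sup>2 - (dist y \<theta>)\<^sup>2) / 2"
    unfolding dist_norm power2_norm_eq_inner
    by (simp add: inner_diff_left inner_diff_right inner_commute field_simps)
  then show ?thesis
    by (simp add: dual_obj_def dual_feasible_def fenchel_conj_positively_homogeneous[OF homog no_minf])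
qed

lemma edom_dual_obj_positively_homogeneous:
  assumes "\<And>k \<beta>. k \<ge> 0 \<Longrightarrow> g (k *\<^sub>R \<beta>) = ereal k * g \<beta>"
    and "\<And>\<beta>. g \<beta> \<noteq> -\<infinity>"
  shows "edom (dual_obj X y g) = dual_feasible X g"
  by (auto simp: edom_def dual_obj_positively_homogeneous[OF assms])

lemma dual_maximiser_is_projection:
  assumes homog: "\<And>k \<beta>. k \<ge> 0 \<Longrightarrow> g (k *\<^sub>R \<beta>) = ereal k * g \<beta>"
    and no_minf: "\<And>\<beta>. g \<beta> \<noteq> -\<infinity>"
    and dual_max: "\<And>\<theta>. dual_obj X y g \<theta> \<le> dual_obj X y g \<theta>hat"
    and feasible: "\<theta>0 \<in> dual_feasible X g"
  shows "\<theta>hat \<in> dual_feasible X g"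
    and "\<forall>\<theta>\<in>dual_feasible X g. dist y \<theta>hat \<le> dist y \<theta>"
proof -
  note D = dual_obj_positively_homogeneous[OF homog no_minf]
  show hat: "\<theta>hat \<in> dual_feasible X g"
    using dual_max[of \<theta>0] feasible by (cases "\<theta>hat \<in> dual_feasible X g") (simp_all add: D)
  show "\<forall>\<theta>\<in>dual_feasible X g. dist y \<theta>hat \<le> dist y \<theta>"
  proof
    fix \<theta>
    assume "\<theta> \<in> dual_feasible X g"
    then have "(dist y \<theta>hat)\<^sup>2 \<le> (dist y \<theta>)\<^sup>2"
      using dual_max[of \<theta>] hat by (simp add: D)
    then show "dist y \<theta>hat \<le> dist y \<theta>"
      by (rule power2_le_imp_le) simp
  qed
qed

lemma ball_on_diameter_iff:
  fixes x a b :: "'a::real_inner"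
  shows "(norm (x - (1/2) *\<^sub>R (a + b)))\<^sup>2 \<le> 1/4 * (norm (a - b))\<^sup>2
    \<longleftrightarrow> (a - x) \<bullet> (b - x) \<le> 0"
proof -
  have "(norm (x - (1/2) *\<^sub>R (a + b)))\<^sup>2 - 1/4 * (norm (a - b))\<^sup>2 = (a - x) \<bullet> (b - x)"
    unfolding power2_norm_eq_inner
    by (simp add: inner_add_left inner_add_right inner_diff_left inner_diff_right
        inner_commute algebra_simps)
  then show ?thesis
    by linarith
qed

theorem theorem6:
  fixes X :: "real^'d^'n" and y :: "real^'n" and g :: "real^'d \<Rightarrow> ereal"
    and \<theta>hat :: "real^'n" and \<beta>t :: "real^'d" and \<theta>t :: "real^'n"
  assumes proper: "proper_fun g"
    and lsc: "lsc_fun g"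
    and convex: "convex_efun g"
    and homog: "\<And>k \<beta>. k \<ge> 0 \<Longrightarrow> g (k *\<^sub>R \<beta>) = ereal k * g \<beta>"
    and relint: "rel_interior (edom g) \<noteq> {}"
    and attains: "\<exists>\<beta>0. \<forall>\<beta>. primal_obj X y g \<beta>0 \<le> primal_obj X y g \<beta>"
    and dual_max: "\<And>\<theta>. dual_obj X y g \<theta> \<le> dual_obj X y g \<theta>hat"
    and dom_t: "\<theta>t \<in> edom (dual_obj X y g)"
  shows "(norm (\<theta>hat - (1/2) *\<^sub>R (\<theta>t + y)))\<^sup>2 \<le> 1/4 * (norm (\<theta>t - y))\<^sup>2
         \<and> 0 \<le> g \<beta>t - ereal (\<theta>hat \<bullet> (X *v \<beta>t))"
proof -
  have no_minf: "\<And>\<beta>. g \<beta> \<noteq> -\<infinity>"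
    using proper by (simp add: proper_fun_def)
  have "\<theta>t \<in> dual_feasible X g"
    using dom_t by (simp add: edom_dual_obj_positively_homogeneous[OF homog no_minf])
  note projection = dual_maximiser_is_projection[OF homog no_minf dual_max this]
  have "(y - \<theta>hat) \<bullet> (\<theta>t - \<theta>hat) \<le> 0"
    using convex_dual_feasible closed_dual_feasible projection \<open>\<theta>t \<in> dual_feasible X g\<close>
    by (intro any_closest_point_dot)
  then have "(norm (\<theta>hat - (1/2) *\<^sub>R (\<theta>t + y)))\<^sup>2 \<le> 1/4 * (norm (\<theta>t - y))\<^sup>2"
    by (subst ball_on_diameter_iff) (simp add: inner_commute)
  moreover have "ereal (\<theta>hat \<bullet> (X *v \<beta>t)) \<le> g \<beta>t"
    using projection(1) by (simp add: dual_feasible_def linear_minorants_def dot_lmul_matrix)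
  then have "0 \<le> g \<beta>t - ereal (\<theta>hat \<bullet> (X *v \<beta>t))"
    by (cases "g \<beta>t") auto
  ultimately show ?thesis
    by blast
qed

end
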